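(* Let $\theta_n>0$ and let $L_{n-1},L_n\ge 1$ be integers. Let $z^l$ be a real tensor and let $z^l_1,\dots,z^l_{L_{n-1}}$ be tensors of the same shape with $\sum_{i=1}^{L_{n-1}} z^l_i=z^l$. Let $X$ be the tensor obtained by stacking them, $X[i]=z^l_i$ for $i\in\{1,\dots,L_{n-1}\}$, and let $\widetilde h(X)$ be the output of the PASC integrate-and-fire procedure (described in the context) with threshold parameter $\theta_n$, input quantization step $L_{n-1}$ and output quantization step $L_n$. Then (a) $\displaystyle \widehat h(z^l):=\theta_n\,\mathrm{clip}\!\left(\frac{1}{L_n}\left\lfloor \frac{z^l L_n}{\theta_n}+\frac12\right\rfloor,0,1\right)=\sum_{j=1}^{L_n}\widetilde h(X)[j]$ (elementwise), and (b) every entry of every $\widetilde h(X)[j]$, $j\in\{1,\dots,L_n\}$, lies in the set $\{0,\theta_n/L_n\}$.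
   Context: $\widehat h$ is the Quantization-Clip-Floor-Shift (QCFS) activation with quantization step $L_n$ and (trained) threshold $\lambda^l=\theta_n$; $\mathrm{clip}(y,0,1)=\min(\max(y,0),1)$ and all operations are elementwise. $H$ denotes the Heaviside step function, $H(y)=1$ if $y\ge 0$ and $H(y)=0$ otherwise. The PASC integrate-and-fire procedure $\widetilde h$ acts independently on each entry; for a single entry, with input values $X[1],\dots,X[L_{n-1}]$, it is as follows. Set $\theta^*=\theta_n/L_n$, membrane potential $m=\theta^*/2$, spike count $s=0$. Stage 1: for $t=1,\dots,L_{n-1}$: set $m\leftarrow m+X[t]$; if $m\ge\theta^*$ then $s\leftarrow s+\theta^*$ and $m\leftarrow m-\theta^*$. Stage 2 (no input; starting from the $m$ and $s$ left by Stage 1): for $t=1,\dots,\max(L_{n-1},L_n)-1$: if $m\ge\theta^*$ then $s\leftarrow s+\theta^*$, $m\leftarrow m-\theta^*$ (excitatory spike); else if $m<0$ then $s\leftarrow s-\theta^*$, $m\leftarrow m+\theta^*$ (inhibitory spike); otherwise nothing. Stage 3: set $\mathrm{mem}(0)=s$; for $t=1,\dots,L_n$: output $\widetilde h(X)[t]=H(\mathrm{mem}(t-1)-\theta^* )\cdot\theta^*$ and set $\mathrm{mem}(t)=\mathrm{mem}(t-1)-\widetilde h(X)[t]$. The output $\widetilde h(X)$ is the stack of the $L_n$ values $\widetilde h(X)[1],\dots,\widetilde h(X)[L_n]$. *)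

theory Defs
  imports Complex_Main
begin

text \<open>Tensors are modelled as functions from an arbitrary index type 'e to real;
  all operations act entrywise. A stacked tensor is a function nat \<Rightarrow> 'e \<Rightarrow> real,
  indexed by time steps 1, 2, ...\<close>

definition heaviside :: "real \<Rightarrow> real" where
  "heaviside y = (if y \<ge> 0 then 1 else 0)"

definition clip01 :: "real \<Rightarrow> real" where
  "clip01 y = min (max y 0) 1"

definition qcfs :: "real \<Rightarrow> nat \<Rightarrow> real \<Rightarrow> real" where
  "qcfs th L z = th * clip01 (of_int \<lfloor>z * real L / th + 1/2\<rfloor> / real L)"

text \<open>Stage 1: one integrate-and-fire step; state is (membrane m, spike count s).\<close>
definition pasc_step1 :: "real \<Rightarrow> real \<times> real \<Rightarrow> real \<Rightarrow> real \<times> real" where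
  "pasc_step1 ths st x =
     (let m = fst st + x; s = snd st in
      if m \<ge> ths then (m - ths, s + ths) else (m, s))"

definition pasc_stage1 :: "real \<Rightarrow> nat \<Rightarrow> (nat \<Rightarrow> real) \<Rightarrow> real \<times> real" where
  "pasc_stage1 ths Lp X = foldl (pasc_step1 ths) (ths / 2, 0) (map X [1..<Lp + 1])"

definition pasc_step2 :: "real \<Rightarrow> real \<times> real \<Rightarrow> real \<times> real" where
  "pasc_step2 ths st =
     (let m = fst st; s = snd st in
      if m \<ge> ths then (m - ths, s + ths)
      else if m < 0 then (m + ths, s - ths)
      else (m, s))"

definition pasc_stage2 :: "real \<Rightarrow> nat \<Rightarrow> nat \<Rightarrow> (nat \<Rightarrow> real) \<Rightarrow> real \<times> real" where
  "pasc_stage2 ths Lp Ln X = (pasc_step2 ths ^^ (max Lp Ln - 1)) (pasc_stage1 ths Lp X)"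

primrec pasc_mem :: "real \<Rightarrow> real \<Rightarrow> nat \<Rightarrow> real" where
  "pasc_mem ths s 0 = s"
| "pasc_mem ths s (Suc t) = pasc_mem ths s t - heaviside (pasc_mem ths s t - ths) * ths"

text \<open>Output of PASC for one entry at time t (meaningful for 1 \<le> t \<le> Ln),
  with threshold parameter th, input step Lp and output step Ln.\<close>
definition pasc_entry :: "real \<Rightarrow> nat \<Rightarrow> nat \<Rightarrow> (nat \<Rightarrow> real) \<Rightarrow> nat \<Rightarrow> real" where
  "pasc_entry th Lp Ln X t =
     (let ths = th / real Ln;
          s = snd (pasc_stage2 ths Lp Ln X)
      in heaviside (pasc_mem ths s (t - 1) - ths) * ths)"

definition pasc :: "real \<Rightarrow> nat \<Rightarrow> nat \<Rightarrow> (nat \<Rightarrow> 'e \<Rightarrow> real) \<Rightarrow> nat \<Rightarrow> 'e \<Rightarrow> real" where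
  "pasc th Lp Ln X t e = pasc_entry th Lp Ln (\<lambda>i. X i e) t"

end

theory Submission
  imports Defs
begin

text \<open>Write \<open>\<theta>\<^sup>* = \<theta>/L\<^sub>n\<close> and \<open>z = \<Sum>\<^sub>i X[i]\<close>. Both integrating stages conserve the charge \<open>m + s\<close>,
  and the spike count is always an integer multiple \<open>s = k \<theta>\<^sup>*\<close>. After stage 1 the charge is
  \<open>\<theta>\<^sup>*/2 + z\<close>, so \<open>k + \<lfloor>m/\<theta>\<^sup>*\<rfloor> = \<lfloor>z/\<theta>\<^sup>* + 1/2\<rfloor>\<close>, the unclipped QCFS level. Stage 2 moves \<open>k\<close>
  one unit per step towards that level and may stop short; but stage 1 leaves \<open>0 \<le> k \<le> L\<^sub>n\<^sub>-\<^sub>1\<close>,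
  with \<open>k \<ge> 1\<close> if \<open>m \<ge> \<theta>\<^sup>*\<close> and \<open>k < L\<^sub>n\<^sub>-\<^sub>1\<close> if \<open>m < 0\<close>, so after \<open>max L\<^sub>n\<^sub>-\<^sub>1 L\<^sub>n - 1\<close> steps
  \<open>k\<close> agrees with the level once both are clipped to \<open>[0, L\<^sub>n]\<close>. Stage 3 then fires exactly
  \<open>min L\<^sub>n (max k 0)\<close> spikes, at the first time steps.\<close>

lemma pasc_step1_charge:
  "fst (pasc_step1 ths st x) + snd (pasc_step1 ths st x) = fst st + snd st + x"
  by (simp add: pasc_step1_def Let_def)

lemma foldl_pasc_step1_charge:
  "fst (foldl (pasc_step1 ths) st xs) + snd (foldl (pasc_step1 ths) st xs)
     = fst st + snd st + sum_list xs"
  by (induction xs arbitrary: st) (simp_all add: pasc_step1_charge)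

definition pasc_stage1_inv :: "real \<Rightarrow> nat \<Rightarrow> real \<times> real \<Rightarrow> bool" where
  "pasc_stage1_inv ths n st \<longleftrightarrow> (\<exists>k::int. snd st = of_int k * ths \<and> 0 \<le> k \<and> k \<le> int n
     \<and> (ths \<le> fst st \<longrightarrow> 1 \<le> k) \<and> (fst st < 0 \<longrightarrow> k + 1 \<le> int n))"

lemma pasc_stage1_inv_step:
  assumes "pasc_stage1_inv ths n st"
  shows "pasc_stage1_inv ths (Suc n) (pasc_step1 ths st x)"
proof -
  obtain m s where st: "st = (m, s)" by fastforce
  from assms obtain k where k: "s = of_int k * ths" "0 \<le> k" "k \<le> int n"
    "ths \<le> m \<Longrightarrow> 1 \<le> k" "m < 0 \<Longrightarrow> k + 1 \<le> int n"
    unfolding pasc_stage1_inv_def st by auto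
  show ?thesis
  proof (cases "ths \<le> m + x")
    case True
    then show ?thesis using k
      by (auto simp: pasc_stage1_inv_def pasc_step1_def st algebra_simps intro!: exI[of _ "k + 1"])
  next
    case False
    then show ?thesis using k
      by (auto simp: pasc_stage1_inv_def pasc_step1_def st intro!: exI[of _ k])
  qed
qed

lemma pasc_stage1_inv_foldl:
  assumes "ths > 0"
  shows "pasc_stage1_inv ths (length xs) (foldl (pasc_step1 ths) (ths / 2, 0) xs)"
proof (induction xs rule: rev_induct)
  case Nil
  show ?case using assms by (auto simp: pasc_stage1_inv_def intro!: exI[of _ 0])
next
  case (snoc x xs)
  then show ?case using pasc_stage1_inv_step by simp
qed

lemma pasc_step2_fixed:
  assumes "0 \<le> m" "m < ths"
  shows "pasc_step2 ths (m, s) = (m, s)"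
  using assms by (simp add: pasc_step2_def)

lemma funpow_pasc_step2:
  assumes "ths > 0" and "j = max (- int n) (min (int n) \<lfloor>m / ths\<rfloor>)"
  shows "(pasc_step2 ths ^^ n) (m, of_int k * ths) = (m - of_int j * ths, of_int (k + j) * ths)"
  using assms(2)
proof (induction n arbitrary: m k j)
  case 0
  then show ?case by simp
next
  case (Suc n)
  consider "ths \<le> m" | "m < 0" | "0 \<le> m" "m < ths" by linarith
  then show ?case
  proof cases
    case 1
    have "1 \<le> \<lfloor>m / ths\<rfloor>"
      using 1 assms(1) by (simp add: le_floor_iff)
    moreover have "\<lfloor>(m - ths) / ths\<rfloor> = \<lfloor>m / ths\<rfloor> - 1"
      using assms(1) by (simp add: diff_divide_distrib)
    ultimately have "(pasc_step2 ths ^^ n) (m - ths, of_int (k + 1) * ths)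
        = (m - ths - of_int (j - 1) * ths, of_int (k + 1 + (j - 1)) * ths)"
      using Suc.prems by (intro Suc.IH) linarith
    moreover have "pasc_step2 ths (m, of_int k * ths) = (m - ths, of_int (k + 1) * ths)"
      using 1 by (simp add: pasc_step2_def algebra_simps)
    ultimately show ?thesis
      by (simp add: funpow_Suc_right algebra_simps del: funpow.simps)
  next
    case 2
    have "\<lfloor>m / ths\<rfloor> < 0"
      using 2 assms(1) by (simp add: floor_less_iff divide_less_0_iff)
    moreover have "\<lfloor>(m + ths) / ths\<rfloor> = \<lfloor>m / ths\<rfloor> + 1"
      using assms(1) by (simp add: add_divide_distrib)
    ultimately have "(pasc_step2 ths ^^ n) (m + ths, of_int (k - 1) * ths)
        = (m + ths - of_int (j + 1) * ths, of_int (k - 1 + (j + 1)) * ths)"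
      using Suc.prems by (intro Suc.IH) linarith
    moreover have "pasc_step2 ths (m, of_int k * ths) = (m + ths, of_int (k - 1) * ths)"
      using 2 assms(1) by (simp add: pasc_step2_def algebra_simps)
    ultimately show ?thesis
      by (simp add: funpow_Suc_right algebra_simps del: funpow.simps)
  next
    case 3
    then have "\<lfloor>m / ths\<rfloor> = 0"
      using assms(1) by (simp add: floor_eq_iff)
    with 3 Suc show ?thesis
      by (simp add: funpow_Suc_right pasc_step2_fixed del: funpow.simps)
  qed
qed

lemma clip_level_after_stage2:
  fixes k d N Lp Ln :: int
  assumes "0 \<le> k" "k \<le> Lp" "1 \<le> d \<Longrightarrow> 1 \<le> k" "d < 0 \<Longrightarrow> k + 1 \<le> Lp"
    and "Lp - 1 \<le> N" "Ln - 1 \<le> N"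
  shows "min Ln (max (k + max (- N) (min N d)) 0) = min Ln (max (k + d) 0)"
  using assms by linarith

lemma pasc_stage2_count:
  assumes "ths > 0"
  obtains k :: int where "snd (pasc_stage2 ths Lp Ln X) = of_int k * ths"
    and "min (int Ln) (max k 0) = min (int Ln) (max \<lfloor>(\<Sum>i=1..Lp. X i) / ths + 1 / 2\<rfloor> 0)"
proof -
  obtain m s where ms: "pasc_stage1 ths Lp X = (m, s)" by fastforce
  have "pasc_stage1_inv ths (length (map X [1..<Lp + 1])) (pasc_stage1 ths Lp X)"
    unfolding pasc_stage1_def by (rule pasc_stage1_inv_foldl[OF assms])
  then have "pasc_stage1_inv ths Lp (m, s)"
    by (simp only: ms length_map length_upt) simp
  then obtain k where k: "s = of_int k * ths" "0 \<le> k" "k \<le> int Lp"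
    "ths \<le> m \<Longrightarrow> 1 \<le> k" "m < 0 \<Longrightarrow> k + 1 \<le> int Lp"
    unfolding pasc_stage1_inv_def by auto
  have "sum_list (map X [1..<Lp + 1]) = (\<Sum>i=1..Lp. X i)"
    by (simp only: interv_sum_list_conv_sum_set_nat set_upt atLeastLessThanSuc_atLeastAtMost
        Suc_eq_plus1[symmetric])
  then have "m + s = ths / 2 + (\<Sum>i=1..Lp. X i)"
    using foldl_pasc_step1_charge[of ths "(ths / 2, 0)" "map X [1..<Lp + 1]"]
    by (simp only: pasc_stage1_def[symmetric] ms fst_conv snd_conv)
  then have "(\<Sum>i=1..Lp. X i) / ths + 1 / 2 = m / ths + of_int k"
    using assms k(1) by (simp add: field_simps)
  then have level: "\<lfloor>(\<Sum>i=1..Lp. X i) / ths + 1 / 2\<rfloor> = k + \<lfloor>m / ths\<rfloor>"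
    by simp
  define N where "N = max Lp Ln - 1"
  define j where "j = max (- int N) (min (int N) \<lfloor>m / ths\<rfloor>)"
  have "snd (pasc_stage2 ths Lp Ln X) = of_int (k + j) * ths"
    using funpow_pasc_step2[OF assms j_def, of k] by (simp add: pasc_stage2_def ms k(1) N_def)
  moreover have "min (int Ln) (max (k + j) 0) = min (int Ln) (max (k + \<lfloor>m / ths\<rfloor>) 0)"
    unfolding j_def
  proof (rule clip_level_after_stage2[where Lp = "int Lp"])
    show "1 \<le> \<lfloor>m / ths\<rfloor> \<Longrightarrow> 1 \<le> k" "\<lfloor>m / ths\<rfloor> < 0 \<Longrightarrow> k + 1 \<le> int Lp"
      using k(4,5) assms by (simp_all add: le_floor_iff floor_less_iff divide_less_0_iff)
  qed (use k(2,3) in \<open>auto simp: N_def\<close>)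
  ultimately show ?thesis
    using level by (intro that[of "k + j"]) simp_all
qed

lemma pasc_mem_multiple:
  assumes "ths > 0"
  shows "pasc_mem ths (of_int k * ths) t = of_int (k - min (int t) (max k 0)) * ths"
proof (induction t)
  case 0
  then show ?case by simp
next
  case (Suc t)
  show ?case
  proof (cases "1 \<le> k - min (int t) (max k 0)")
    case True
    then have "1 * ths \<le> of_int (k - min (int t) (max k 0)) * ths"
      using assms by (intro mult_right_mono) auto
    then have "pasc_mem ths (of_int k * ths) t - ths \<ge> 0"
      using Suc.IH by linarith
    then show ?thesis using Suc True by (simp add: heaviside_def algebra_simps)
  next
    case False
    then have "of_int (k - min (int t) (max k 0)) * ths < 1 * ths"
      using assms by (intro mult_strict_right_mono) auto
    then have "pasc_mem ths (of_int k * ths) t - ths < 0"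
      using Suc.IH by linarith
    moreover have "min (int (Suc t)) (max k 0) = min (int t) (max k 0)" using False by auto
    ultimately show ?thesis using Suc by (simp add: heaviside_def)
  qed
qed

lemma pasc_output_multiple:
  assumes "ths > 0" "1 \<le> t"
  shows "heaviside (pasc_mem ths (of_int k * ths) (t - 1) - ths) * ths
    = (if int t \<le> k then ths else 0)"
proof -
  define e where "e = k - min (int t - 1) (max k 0) - 1"
  have "pasc_mem ths (of_int k * ths) (t - 1) = of_int (k - min (int t - 1) (max k 0)) * ths"
    using pasc_mem_multiple[OF assms(1), of k "t - 1"] assms(2) by (simp add: of_nat_diff)
  then have "pasc_mem ths (of_int k * ths) (t - 1) - ths = of_int e * ths"
    by (simp add: e_def algebra_simps)
  moreover have "0 \<le> e \<longleftrightarrow> int t \<le> k" by (auto simp: e_def)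
  ultimately show ?thesis using assms(1) by (simp add: heaviside_def zero_le_mult_iff)
qed

lemma sum_spikes_clip:
  "(\<Sum>j=1..n. if int j \<le> k then ths else 0) = of_int (min (int n) (max k 0)) * (ths :: real)"
  by (induction n) (auto simp: algebra_simps)

lemma qcfs_clip:
  assumes "L \<ge> 1"
  shows "qcfs \<theta> L z = of_int (min (int L) (max \<lfloor>z * real L / \<theta> + 1/2\<rfloor> 0)) * (\<theta> / real L)"
  using assms by (auto simp: qcfs_def clip01_def min_def max_def field_simps)

lemma qcfs_eq_sum_pasc_entry:
  assumes "\<theta> > 0" "Ln \<ge> 1"
  shows "qcfs \<theta> Ln (\<Sum>i=1..Lp. X i) = (\<Sum>j=1..Ln. pasc_entry \<theta> Lp Ln X j)"
proof -
  define ths where "ths = \<theta> / real Ln"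
  have ths: "ths > 0" using assms by (simp add: ths_def)
  obtain k where k: "snd (pasc_stage2 ths Lp Ln X) = of_int k * ths"
    and level: "min (int Ln) (max k 0) = min (int Ln) (max \<lfloor>(\<Sum>i=1..Lp. X i) / ths + 1 / 2\<rfloor> 0)"
    using pasc_stage2_count[OF ths] .
  have "(\<Sum>j=1..Ln. pasc_entry \<theta> Lp Ln X j) = (\<Sum>j=1..Ln. if int j \<le> k then ths else 0)"
  proof (rule sum.cong)
    fix j assume "j \<in> {1..Ln}"
    then have "1 \<le> j" by simp
    show "pasc_entry \<theta> Lp Ln X j = (if int j \<le> k then ths else 0)"
      unfolding pasc_entry_def Let_def ths_def[symmetric] k pasc_output_multiple[OF ths \<open>1 \<le> j\<close>] ..
  qed simp
  also have "\<dots> = of_int (min (int Ln) (max k 0)) * ths"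
    by (rule sum_spikes_clip)
  also have "\<dots> = qcfs \<theta> Ln (\<Sum>i=1..Lp. X i)"
    using assms level by (simp add: qcfs_clip ths_def)
  finally show ?thesis ..
qed

theorem theorem2:
  fixes \<theta> :: real and Lp Ln :: nat
    and z :: "'e \<Rightarrow> real" and X :: "nat \<Rightarrow> 'e \<Rightarrow> real"
  assumes "\<theta> > 0" and "Lp \<ge> 1" and "Ln \<ge> 1"
    and "\<And>e. (\<Sum>i=1..Lp. X i e) = z e"
  shows "(\<forall>e. qcfs \<theta> Ln (z e) = (\<Sum>j=1..Ln. pasc \<theta> Lp Ln X j e))
       \<and> (\<forall>j\<in>{1..Ln}. \<forall>e. pasc \<theta> Lp Ln X j e \<in> {0, \<theta> / real Ln})"
proof
  show "\<forall>e. qcfs \<theta> Ln (z e) = (\<Sum>j=1..Ln. pasc \<theta> Lp Ln X j e)"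
    using qcfs_eq_sum_pasc_entry[OF assms(1,3)] assms(4) unfolding pasc_def by metis
  show "\<forall>j\<in>{1..Ln}. \<forall>e. pasc \<theta> Lp Ln X j e \<in> {0, \<theta> / real Ln}"
    by (simp add: pasc_def pasc_entry_def Let_def heaviside_def)
qed

end
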